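(* Let $f\in L^2(\rho_X)$ satisfy $\|f-\eta\|_{L^2(\rho_X)}\le\varepsilon$ for some $\varepsilon>0$. Then: (i) If $\eta$ satisfies the low-noise condition, i.e. there are $q>0$, $C>0$ with $\mathbb P(|\eta(X)|\le\delta)\le C\delta^q$ for all $\delta>0$, then for all $\delta>\varepsilon$ and $0<\nu<\delta$, \[\mathbb P(|f(X)|\le\nu)\le\frac{\varepsilon^2}{(\delta-\nu)^2}+C\delta^q.\] (ii) If $\eta$ satisfies the hard-margin condition $\mathbb P(|\eta(X)|>\delta)=1$ for some $\delta>0$, and $\varepsilon<\delta$, then for all $\nu<\delta$, \[\mathbb P(|f(X)|\le\nu)\le\frac{\varepsilon^2}{(\delta-\nu)^2}.\]
   Context: $\mathcal X=[0,1]^d$, $\rho$ is a probability distribution on $\mathcal X\times\{-1,1\}$ with $X$-marginal $\rho_X$, $(X,Y)\sim\rho$, and $\eta(x)=\mathbb E[Y\mid X=x]$. *)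

theory Defs
  imports "HOL-Probability.Probability"
begin

text \<open>The cube [0,1]^d, with d the (arbitrary, fixed) cardinality of the index type 'd.\<close>
definition unit_cube :: "(real ^ 'd) set" where
  "unit_cube = {x. \<forall>i. 0 \<le> x $ i \<and> x $ i \<le> 1}"

definition marginal_X :: "((real ^ 'd) \<times> real) measure \<Rightarrow> (real ^ 'd) measure" where
  "marginal_X \<rho> = distr \<rho> borel fst"

definition data_distribution :: "((real ^ 'd) \<times> real) measure \<Rightarrow> bool" where
  "data_distribution \<rho> \<longleftrightarrow> prob_space \<rho> \<and> sets \<rho> = sets (borel \<Otimes>\<^sub>M borel)
     \<and> measure \<rho> (unit_cube \<times> {-1, 1}) = 1"

text \<open>eta is (a version of) the regression function x |-> E[Y | X = x]:
  a Borel function with E[1_A(X) Y] = E[1_A(X) eta(X)] for every Borel set A.\<close>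
definition regression_function ::
    "((real ^ 'd) \<times> real) measure \<Rightarrow> ((real ^ 'd) \<Rightarrow> real) \<Rightarrow> bool" where
  "regression_function \<rho> \<eta> \<longleftrightarrow> \<eta> \<in> borel_measurable borel
     \<and> integrable (marginal_X \<rho>) \<eta>
     \<and> (\<forall>A \<in> sets borel.
          (\<integral>z. indicator A (fst z) * snd z \<partial>\<rho>) = (\<integral>x. indicator A x * \<eta> x \<partial>marginal_X \<rho>))"

definition L2_norm_X :: "((real ^ 'd) \<times> real) measure \<Rightarrow> ((real ^ 'd) \<Rightarrow> real) \<Rightarrow> real" where
  "L2_norm_X \<rho> g = sqrt (\<integral>x. (g x)\<^sup>2 \<partial>marginal_X \<rho>)"

end

theory Submission
  imports Defs
begin

text \<open>Where \<open>|f| \<le> \<nu>\<close> but \<open>|\<eta>| > \<delta>\<close>, the error \<open>|f - \<eta>|\<close> is at least \<open>\<delta> - \<nu>\<close>; by Chebyshev's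
  inequality this set has probability at most \<open>\<epsilon>\<^sup>2 / (\<delta> - \<nu>)\<^sup>2\<close>, and the set where \<open>|\<eta>| \<le> \<delta>\<close>
  is controlled by the low-noise (resp. hard-margin) condition. The only subtle point is that
  \<open>f - \<eta>\<close> must really be square integrable, which holds because labels in \<open>{-1, 1}\<close> force
  \<open>|\<eta>| \<le> 1\<close> almost everywhere.\<close>

lemma AE_le_if_set_integral_le:
  fixes f g :: "'a \<Rightarrow> real"
  assumes f: "integrable M f" and g: "integrable M g"
    and le: "\<And>A. A \<in> sets M \<Longrightarrow> (\<integral>x\<in>A. f x \<partial>M) \<le> (\<integral>x\<in>A. g x \<partial>M)"
  shows "AE x in M. f x \<le> g x"
proof -
  define A where "A = {x \<in> space M. g x < f x}"
  have A_sets: "A \<in> sets M"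
    unfolding A_def using borel_measurable_integrable[OF f] borel_measurable_integrable[OF g]
    by measurable
  have diff: "(\<integral>x\<in>A. (f x - g x) \<partial>M) = (\<integral>x\<in>A. f x \<partial>M) - (\<integral>x\<in>A. g x \<partial>M)"
    using integrable_mult_indicator[OF A_sets f] integrable_mult_indicator[OF A_sets g]
    by (intro set_integral_diff) (simp_all add: set_integrable_def)
  have "0 \<le> (\<integral>x\<in>A. (f x - g x) \<partial>M)"
    unfolding set_lebesgue_integral_def by (rule integral_nonneg_AE) (auto simp: A_def indicator_def)
  with diff le[OF A_sets] have "(\<integral>x\<in>A. (f x - g x) \<partial>M) = 0" by simp
  then have "A \<in> null_sets M"
    by (intro null_if_pos_func_has_zero_int[OF _ A_sets]) (auto simp: A_def f g)
  then show ?thesis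
    by (rule AE_not_in[THEN AE_mp]) (auto simp: A_def intro!: AE_I2)
qed

lemma AE_abs_le_if_set_integrals_of_bounded_agree:
  fixes X :: "'a \<Rightarrow> 'b" and Y :: "'a \<Rightarrow> real" and \<eta> :: "'b \<Rightarrow> real"
  assumes "finite_measure \<rho>"
    and X [measurable]: "X \<in> \<rho> \<rightarrow>\<^sub>M N" and Y [measurable]: "Y \<in> borel_measurable \<rho>"
    and Y_bound: "AE z in \<rho>. \<bar>Y z\<bar> \<le> B"
    and \<eta>_int: "integrable (distr \<rho> N X) \<eta>"
    and \<eta>_eq: "\<And>A. A \<in> sets N \<Longrightarrow>
      (\<integral>z. indicator A (X z) * Y z \<partial>\<rho>) = (\<integral>x. indicator A x * \<eta> x \<partial>distr \<rho> N X)"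
  shows "AE x in distr \<rho> N X. \<bar>\<eta> x\<bar> \<le> B"
proof -
  interpret finite_measure \<rho> by fact
  interpret D: finite_measure "distr \<rho> N X" by (rule finite_measure_distr[OF X])
  have bound: "\<bar>\<integral>x\<in>A. \<eta> x \<partial>distr \<rho> N X\<bar> \<le> (\<integral>x\<in>A. B \<partial>distr \<rho> N X)"
    if A [measurable]: "A \<in> sets N" for A
  proof -
    have "\<bar>\<integral>z. indicator A (X z) * Y z \<partial>\<rho>\<bar> \<le> (\<integral>z. indicator A (X z) * B \<partial>\<rho>)"
    proof (rule integral_abs_bound[THEN order_trans], rule integral_mono_AE)
      show "integrable \<rho> (\<lambda>z. \<bar>indicator A (X z) * Y z\<bar>)"
        using Y_bound by (intro integrable_const_bound[where B = "\<bar>B\<bar>"]) (auto simp: indicator_def)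
      show "integrable \<rho> (\<lambda>z. indicator A (X z) * B)"
        by (intro integrable_const_bound[where B = "\<bar>B\<bar>"]) (auto simp: indicator_def)
      show "AE z in \<rho>. \<bar>indicator A (X z) * Y z\<bar> \<le> indicator A (X z) * B"
        using Y_bound by eventually_elim (auto simp: indicator_def)
    qed
    also have "(\<integral>z. indicator A (X z) * B \<partial>\<rho>) = (\<integral>x. indicator A x * B \<partial>distr \<rho> N X)"
      by (rule integral_distr[symmetric]) measurable
    finally show ?thesis
      using \<eta>_eq[OF A] by (simp add: set_lebesgue_integral_def)
  qed
  have const_int: "integrable (distr \<rho> N X) (\<lambda>_. B)" by simp
  have "AE x in distr \<rho> N X. \<eta> x \<le> B"
    using bound by (intro AE_le_if_set_integral_le[OF \<eta>_int const_int]) (auto simp: abs_le_iff)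
  moreover have "AE x in distr \<rho> N X. - \<eta> x \<le> B"
    using bound by (intro AE_le_if_set_integral_le[OF _ const_int])
      (auto simp: \<eta>_int abs_le_iff set_lebesgue_integral_def)
  ultimately show ?thesis by eventually_elim auto
qed

lemma (in finite_measure) integrable_square_diff_bounded:
  fixes f g :: "'a \<Rightarrow> real"
  assumes [measurable]: "f \<in> borel_measurable M" "g \<in> borel_measurable M"
    and f_sq: "integrable M (\<lambda>x. (f x)\<^sup>2)" and g_bound: "AE x in M. \<bar>g x\<bar> \<le> B"
  shows "integrable M (\<lambda>x. (f x - g x)\<^sup>2)"
proof (rule Bochner_Integration.integrable_bound[where f = "\<lambda>x. 2 * (f x)\<^sup>2 + 2 * B\<^sup>2"])
  show "integrable M (\<lambda>x. 2 * (f x)\<^sup>2 + 2 * B\<^sup>2)" using f_sq by simp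
  show "AE x in M. norm ((f x - g x)\<^sup>2) \<le> norm (2 * (f x)\<^sup>2 + 2 * B\<^sup>2)"
    using g_bound
  proof eventually_elim
    case (elim x)
    have "(g x)\<^sup>2 \<le> B\<^sup>2" using power_mono[OF elim abs_ge_zero, of 2] by simp
    moreover have "0 \<le> (f x + g x)\<^sup>2" by simp
    ultimately have "(f x - g x)\<^sup>2 \<le> 2 * (f x)\<^sup>2 + 2 * B\<^sup>2"
      by (simp add: power2_eq_square algebra_simps)
    then show ?case by simp
  qed
qed measurable

lemma (in finite_measure) measure_abs_le_le_nearby_plus_second_moment:
  fixes f g :: "'a \<Rightarrow> real"
  assumes [measurable]: "f \<in> borel_measurable M" "g \<in> borel_measurable M"
    and sq_int: "integrable M (\<lambda>x. (f x - g x)\<^sup>2)" and "\<nu> < \<delta>"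
  shows "measure M {x \<in> space M. \<bar>f x\<bar> \<le> \<nu>}
    \<le> measure M {x \<in> space M. \<bar>g x\<bar> \<le> \<delta>} + (\<integral>x. (f x - g x)\<^sup>2 \<partial>M) / (\<delta> - \<nu>)\<^sup>2"
proof -
  let ?far = "{x \<in> space M. \<bar>f x - g x\<bar> \<ge> \<delta> - \<nu>}"
  have "{x \<in> space M. \<bar>f x\<bar> \<le> \<nu>} \<subseteq> {x \<in> space M. \<bar>g x\<bar> \<le> \<delta>} \<union> ?far"
    by auto
  then have "measure M {x \<in> space M. \<bar>f x\<bar> \<le> \<nu>} \<le> measure M ({x \<in> space M. \<bar>g x\<bar> \<le> \<delta>} \<union> ?far)"
    by (intro finite_measure_mono) measurable
  also have "\<dots> \<le> measure M {x \<in> space M. \<bar>g x\<bar> \<le> \<delta>} + measure M ?far"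
    by (intro measure_Un_le) measurable
  also have "measure M ?far \<le> (\<integral>x. (f x - g x)\<^sup>2 \<partial>M) / (\<delta> - \<nu>)\<^sup>2"
    using second_moment_method[of "\<lambda>x. f x - g x" "\<delta> - \<nu>"] sq_int \<open>\<nu> < \<delta>\<close> by simp
  finally show ?thesis by simp
qed

lemma space_marginal_X [simp]: "space (marginal_X \<rho>) = UNIV"
  and sets_marginal_X [simp, measurable_cong]: "sets (marginal_X \<rho>) = sets borel"
  by (simp_all add: marginal_X_def)

lemma data_distribution_measurable:
  assumes "data_distribution \<rho>"
  shows "fst \<in> \<rho> \<rightarrow>\<^sub>M borel" and "snd \<in> borel_measurable \<rho>"
proof -
  have sets: "sets \<rho> = sets (borel \<Otimes>\<^sub>M borel)"
    using assms unfolding data_distribution_def by simp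
  show "fst \<in> \<rho> \<rightarrow>\<^sub>M borel" "snd \<in> borel_measurable \<rho>"
    unfolding measurable_cong_sets[OF sets refl] by simp_all
qed

lemma data_distribution_prob_space_marginal_X:
  assumes "data_distribution \<rho>"
  shows "prob_space (marginal_X \<rho>)"
  using assms unfolding data_distribution_def marginal_X_def
  by (blast intro: prob_space.prob_space_distr data_distribution_measurable(1)[OF assms])

lemma regression_function_abs_le_1:
  assumes \<rho>: "data_distribution \<rho>" and \<eta>: "regression_function \<rho> \<eta>"
  shows "AE x in marginal_X \<rho>. \<bar>\<eta> x\<bar> \<le> 1"
proof -
  interpret prob_space \<rho> using \<rho> unfolding data_distribution_def by simp
  have "AE z in \<rho>. z \<in> unit_cube \<times> {-1, 1}"
    using \<rho> unfolding data_distribution_def by (intro AE_prob_1) auto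
  then have label_bound: "AE z in \<rho>. \<bar>snd z\<bar> \<le> 1" by eventually_elim auto
  from \<eta> show ?thesis
    unfolding regression_function_def marginal_X_def
    using AE_abs_le_if_set_integrals_of_bounded_agree[OF finite_measure
        data_distribution_measurable[OF \<rho>] label_bound]
    by auto
qed

theorem lemma8:
  fixes \<rho> :: "((real ^ 'd) \<times> real) measure"
    and \<eta> f :: "(real ^ 'd) \<Rightarrow> real"
    and \<epsilon> :: real
  assumes rho: "data_distribution \<rho>"
    and eta: "regression_function \<rho> \<eta>"
    and f_meas: "f \<in> borel_measurable borel"
    and f_L2: "integrable (marginal_X \<rho>) (\<lambda>x. (f x)\<^sup>2)"
    and eps_pos: "\<epsilon> > 0"
    and close: "L2_norm_X \<rho> (\<lambda>x. f x - \<eta> x) \<le> \<epsilon>"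
  shows "(\<forall>q C. q > 0 \<and> C > 0
            \<and> (\<forall>\<delta>>0. measure (marginal_X \<rho>) {x. \<bar>\<eta> x\<bar> \<le> \<delta>} \<le> C * \<delta> powr q)
          \<longrightarrow> (\<forall>\<delta> \<nu>. \<delta> > \<epsilon> \<and> 0 < \<nu> \<and> \<nu> < \<delta> \<longrightarrow>
                measure (marginal_X \<rho>) {x. \<bar>f x\<bar> \<le> \<nu>}
                  \<le> \<epsilon>\<^sup>2 / (\<delta> - \<nu>)\<^sup>2 + C * \<delta> powr q))
       \<and> (\<forall>\<delta>. \<delta> > 0 \<and> measure (marginal_X \<rho>) {x. \<bar>\<eta> x\<bar> > \<delta>} = 1 \<and> \<epsilon> < \<delta>
          \<longrightarrow> (\<forall>\<nu>. \<nu> < \<delta> \<longrightarrow>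
                measure (marginal_X \<rho>) {x. \<bar>f x\<bar> \<le> \<nu>} \<le> \<epsilon>\<^sup>2 / (\<delta> - \<nu>)\<^sup>2))"
proof -
  interpret prob_space "marginal_X \<rho>" by (rule data_distribution_prob_space_marginal_X[OF rho])
  have \<eta>_meas [measurable]: "\<eta> \<in> borel_measurable borel"
    using eta unfolding regression_function_def by simp
  note f_meas [measurable]
  have sq_int: "integrable (marginal_X \<rho>) (\<lambda>x. (f x - \<eta> x)\<^sup>2)"
    by (rule integrable_square_diff_bounded[OF _ _ f_L2 regression_function_abs_le_1[OF rho eta]])
      measurable
  have sq_le: "(\<integral>x. (f x - \<eta> x)\<^sup>2 \<partial>marginal_X \<rho>) \<le> \<epsilon>\<^sup>2"
    using close unfolding L2_norm_X_def by (rule sqrt_le_D)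
  have key: "measure (marginal_X \<rho>) {x. \<bar>f x\<bar> \<le> \<nu>}
      \<le> measure (marginal_X \<rho>) {x. \<bar>\<eta> x\<bar> \<le> \<delta>} + \<epsilon>\<^sup>2 / (\<delta> - \<nu>)\<^sup>2" if "\<nu> < \<delta>" for \<nu> \<delta>
    using measure_abs_le_le_nearby_plus_second_moment[OF _ _ sq_int that]
      divide_right_mono[OF sq_le, of "(\<delta> - \<nu>)\<^sup>2"]
    by simp
  show ?thesis
  proof (intro conjI allI impI)
    fix q C \<delta> \<nu> :: real
    assume "q > 0 \<and> C > 0 \<and> (\<forall>\<delta>>0. measure (marginal_X \<rho>) {x. \<bar>\<eta> x\<bar> \<le> \<delta>} \<le> C * \<delta> powr q)"
      and \<delta>\<nu>: "\<delta> > \<epsilon> \<and> 0 < \<nu> \<and> \<nu> < \<delta>"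
    then have "measure (marginal_X \<rho>) {x. \<bar>\<eta> x\<bar> \<le> \<delta>} \<le> C * \<delta> powr q"
      using eps_pos by auto
    with key[of \<nu> \<delta>] \<delta>\<nu>
    show "measure (marginal_X \<rho>) {x. \<bar>f x\<bar> \<le> \<nu>} \<le> \<epsilon>\<^sup>2 / (\<delta> - \<nu>)\<^sup>2 + C * \<delta> powr q"
      by linarith
  next
    fix \<delta> \<nu> :: real
    assume "\<delta> > 0 \<and> measure (marginal_X \<rho>) {x. \<bar>\<eta> x\<bar> > \<delta>} = 1 \<and> \<epsilon> < \<delta>" and "\<nu> < \<delta>"
    moreover have "{x. \<bar>\<eta> x\<bar> \<le> \<delta>} = space (marginal_X \<rho>) - {x. \<bar>\<eta> x\<bar> > \<delta>}" by auto
    ultimately show "measure (marginal_X \<rho>) {x. \<bar>f x\<bar> \<le> \<nu>} \<le> \<epsilon>\<^sup>2 / (\<delta> - \<nu>)\<^sup>2"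
      using key[of \<nu> \<delta>] prob_compl[of "{x. \<bar>\<eta> x\<bar> > \<delta>}"] by simp
  qed
qed

end
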